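(* Let $N$ be a stepwise NFTA and $h$ the homomorphism from the free forest algebra over $\Sigma$ to the transition algebra $\mathcal{F}_N$ determined by $h(a_\Box)=\{\mathrm{SIG}(\lambda)\mid\lambda\text{ is a valid run of }N\text{ on }a_\Box\}$ for all $a\in\Sigma$. Then for every nonempty forest or context $D$ over $\Sigma$, $h(D)=\{\mathrm{SIG}(\lambda)\mid\lambda\text{ is a valid run of }N\text{ on }D\}$.
   Context: A stepwise NFTA is $N=(Q,\Sigma,\delta,\mathsf{Init},q_0,q_F)$, $\delta\subseteq Q^3$, transition $(q_1,q_2,q_3)$ written $q_1\xrightarrow{q_2}q_3$. A run on a forest $F$ assigns to each node $v$ a transition $\lambda_{\mathsf{pre}}(v)\xrightarrow{\lambda_{\mathsf{self}}(v)}\lambda_{\mathsf{post}}(v)\in\delta$ such that: $\lambda_{\mathsf{pre}}(v)\in\mathsf{Init}(\mathrm{lab}(\mathrm{parent}(v)))$ if $v$ is a non-root first child; $\lambda_{\mathsf{pre}}(v)=\lambda_{\mathsf{post}}(w)$ if $w$ is the left sibling of $v$ (including consecutive roots); $\lambda_{\mathsf{self}}(v)\in\mathsf{Init}(\mathrm{lab}(v))$ if $v$ is a leaf; $\lambda_{\mathsf{self}}(v)=\lambda_{\mathsf{post}}(w)$ if $w$ is the last child of $v$; $\lambda_{\mathsf{pre}}$ of the leftmost root is arbitrary. Runs on a context are defined the same way for the extended automaton with a fresh state $q_\Box$, $\mathsf{Init}(\Box)=\{q_\Box\}$ for the hole $\Box$, and additional transitions $(Q\setminus\{q_\Box\})\times\{q_\Box\}\times(Q\setminus\{q_\Box\})$.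 For a run with roots $v_1\le\dots\le v_k$, $\mathrm{SIG}(\lambda)=(\lambda_{\mathsf{pre}}(v_1),\lambda_{\mathsf{post}}(v_k))$ for a forest and $((\lambda_{\mathsf{pre}}(v_1),\lambda_{\mathsf{post}}(v_k)),(\lambda_{\mathsf{pre}}(\Box),\lambda_{\mathsf{post}}(\Box)))$ for a context. $a_\Box$ denotes the context consisting of an $a$-labelled root whose only child is the hole. The transition algebra $\mathcal{F}_N$ has forest elements $2^{Q^2}$, context elements $2^{(Q^2)^2}$, neutral elements $\mathrm{id}_Q$, $\mathrm{id}_{Q^2}$, and operations: $F_1\oplus F_2=\{(q_1,q_3)\mid(q_1,q_2)\in F_1,(q_2,q_3)\in F_2\}$; $C_1\odot C_2=\{((q_1,q_2),(q_5,q_6))\mid((q_1,q_2),(q_3,q_4))\in C_1,((q_3,q_4),(q_5,q_6))\in C_2\}$; $C\odot F=\{(q_1,q_2)\mid((q_1,q_2),(q_3,q_4))\in C,(q_3,q_4)\in F\}$; $F\oplus C=\{((q_1,q_3),(q_4,q_5))\mid(q_1,q_2)\in F,((q_2,q_3),(q_4,q_5))\in C\}$; $C\oplus F=\{((q_1,q_5),(q_3,q_4))\mid((q_1,q_2),(q_3,q_4))\in C,(q_2,q_5)\in F\}$. The free forest algebra consists of all forests and contexts over $\Sigma$ with concatenation and context application (substituting for the hole); a homomorphism preserves all these operations and neutral elements, and is determined by its values on the contexts $a_\Box$. *)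

theory Defs
  imports Main
begin

datatype 'a tree = Node 'a "'a tree list" | Hole

type_synonym 'a forest = "'a tree list"

fun holes_t :: "'a tree \<Rightarrow> nat" where
  "holes_t Hole = 1"
| "holes_t (Node a ts) = sum_list (map holes_t ts)"

definition holes :: "'a forest \<Rightarrow> nat" where
  "holes F = sum_list (map holes_t F)"

definition is_forest :: "'a forest \<Rightarrow> bool" where
  "is_forest F \<longleftrightarrow> holes F = 0"

definition is_context :: "'a forest \<Rightarrow> bool" where
  "is_context C \<longleftrightarrow> holes C = 1"

fun subst_t :: "'a tree \<Rightarrow> 'a forest \<Rightarrow> 'a forest" where
  "subst_t Hole D = D"
| "subst_t (Node a ts) D = [Node a (concat (map (\<lambda>t. subst_t t D) ts))]"

definition subst :: "'a forest \<Rightarrow> 'a forest \<Rightarrow> 'a forest" where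
  "subst C D = concat (map (\<lambda>t. subst_t t D) C)"

definition box_ctx :: "'a \<Rightarrow> 'a forest" where
  "box_ctx a = [Node a [Hole]]"

text \<open>A node is addressed by a nonempty list [i0,i1,...,ik]: root i0, then child i1, etc.\<close>
fun subf :: "'a forest \<Rightarrow> nat list \<Rightarrow> 'a tree option" where
  "subf F [] = None"
| "subf F (i # p) =
     (if i < length F then
        (case p of [] \<Rightarrow> Some (F ! i)
         | _ \<Rightarrow> (case F ! i of Node a ts \<Rightarrow> subf ts p | Hole \<Rightarrow> None))
      else None)"

definition nodes :: "'a forest \<Rightarrow> nat list set" where
  "nodes F = {v. subf F v \<noteq> None}"

fun lab :: "'a tree \<Rightarrow> 'a option" where
  "lab (Node a ts) = Some a"
| "lab Hole = None"

fun nchild :: "'a tree \<Rightarrow> nat" where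
  "nchild (Node a ts) = length ts"
| "nchild Hole = 0"

text \<open>A run assigns to each node a transition (pre, self, post). Generic over the state type
's, a transition set Delta and an initial-state function I on labels (None = hole label).\<close>

type_synonym 's trans = "'s \<times> 's \<times> 's"

definition pre :: "'s trans \<Rightarrow> 's" where "pre t = fst t"
definition self :: "'s trans \<Rightarrow> 's" where "self t = fst (snd t)"
definition post :: "'s trans \<Rightarrow> 's" where "post t = snd (snd t)"

definition valid_run ::
  "'s trans set \<Rightarrow> ('a option \<Rightarrow> 's set) \<Rightarrow> 'a forest \<Rightarrow> (nat list \<Rightarrow> 's trans) \<Rightarrow> bool" where
  "valid_run \<Delta> I F run \<longleftrightarrow>
     (\<forall>v \<in> nodes F. run v \<in> \<Delta>)
   \<and> (\<forall>p t. p \<noteq> [] \<and> p @ [0] \<in> nodes F \<and> subf F p = Some t \<longrightarrow> pre (run (p @ [0])) \<in> I (lab t))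
   \<and> (\<forall>p i. p @ [Suc i] \<in> nodes F \<longrightarrow> pre (run (p @ [Suc i])) = post (run (p @ [i])))
   \<and> (\<forall>v t. subf F v = Some t \<and> nchild t = 0 \<longrightarrow> self (run v) \<in> I (lab t))
   \<and> (\<forall>v t. subf F v = Some t \<and> nchild t > 0 \<longrightarrow> self (run v) = post (run (v @ [nchild t - 1])))"

definition init_forest :: "('a \<Rightarrow> 'q set) \<Rightarrow> 'a option \<Rightarrow> 'q set" where
  "init_forest Init x = (case x of Some a \<Rightarrow> Init a | None \<Rightarrow> {})"

text \<open>Contexts: the extended automaton with fresh state q_Box, encoded as None :: 'q option.\<close>
definition delta_ext :: "'q trans set \<Rightarrow> 'q option trans set" where
  "delta_ext \<delta> = {(Some p, Some q, Some r) | p q r. (p, q, r) \<in> \<delta>}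
                \<union> {(Some p, None, Some r) | p r. True}"

definition init_ext :: "('a \<Rightarrow> 'q set) \<Rightarrow> 'a option \<Rightarrow> 'q option set" where
  "init_ext Init x = (case x of Some a \<Rightarrow> Some ` Init a | None \<Rightarrow> {None})"

definition forest_sigs :: "'q trans set \<Rightarrow> ('a \<Rightarrow> 'q set) \<Rightarrow> 'a forest \<Rightarrow> ('q \<times> 'q) set" where
  "forest_sigs \<delta> Init F =
     {(p, q). \<exists>run. valid_run \<delta> (init_forest Init) F run
                 \<and> pre (run [0]) = p \<and> post (run [length F - 1]) = q}"

definition ctx_sigs ::
  "'q trans set \<Rightarrow> ('a \<Rightarrow> 'q set) \<Rightarrow> 'a forest \<Rightarrow> (('q \<times> 'q) \<times> ('q \<times> 'q)) set" where
  "ctx_sigs \<delta> Init C =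
     {((p, q), (r, s)). \<exists>run hp. valid_run (delta_ext \<delta>) (init_ext Init) C run
                 \<and> subf C hp = Some Hole
                 \<and> pre (run [0]) = Some p \<and> post (run [length C - 1]) = Some q
                 \<and> pre (run hp) = Some r \<and> post (run hp) = Some s}"

definition fplus :: "('q \<times> 'q) set \<Rightarrow> ('q \<times> 'q) set \<Rightarrow> ('q \<times> 'q) set" where
  "fplus F1 F2 = {(q1, q3) | q1 q2 q3. (q1, q2) \<in> F1 \<and> (q2, q3) \<in> F2}"

definition ccomp ::
  "(('q \<times> 'q) \<times> ('q \<times> 'q)) set \<Rightarrow> (('q \<times> 'q) \<times> ('q \<times> 'q)) set \<Rightarrow> (('q \<times> 'q) \<times> ('q \<times> 'q)) set" where
  "ccomp C1 C2 = {((q1, q2), (q5, q6)) | q1 q2 q3 q4 q5 q6.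
                    ((q1, q2), (q3, q4)) \<in> C1 \<and> ((q3, q4), (q5, q6)) \<in> C2}"

definition capp :: "(('q \<times> 'q) \<times> ('q \<times> 'q)) set \<Rightarrow> ('q \<times> 'q) set \<Rightarrow> ('q \<times> 'q) set" where
  "capp C F = {(q1, q2) | q1 q2 q3 q4. ((q1, q2), (q3, q4)) \<in> C \<and> (q3, q4) \<in> F}"

definition fcplus ::
  "('q \<times> 'q) set \<Rightarrow> (('q \<times> 'q) \<times> ('q \<times> 'q)) set \<Rightarrow> (('q \<times> 'q) \<times> ('q \<times> 'q)) set" where
  "fcplus F C = {((q1, q3), (q4, q5)) | q1 q2 q3 q4 q5.
                   (q1, q2) \<in> F \<and> ((q2, q3), (q4, q5)) \<in> C}"

definition cfplus ::
  "(('q \<times> 'q) \<times> ('q \<times> 'q)) set \<Rightarrow> ('q \<times> 'q) set \<Rightarrow> (('q \<times> 'q) \<times> ('q \<times> 'q)) set" where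
  "cfplus C F = {((q1, q5), (q3, q4)) | q1 q2 q3 q4 q5.
                   ((q1, q2), (q3, q4)) \<in> C \<and> (q2, q5) \<in> F}"

definition is_hom ::
  "('a forest \<Rightarrow> ('q \<times> 'q) set) \<Rightarrow> ('a forest \<Rightarrow> (('q \<times> 'q) \<times> ('q \<times> 'q)) set) \<Rightarrow> bool" where
  "is_hom hF hC \<longleftrightarrow>
     hF [] = Id \<and> hC [Hole] = Id
   \<and> (\<forall>F1 F2. is_forest F1 \<and> is_forest F2 \<longrightarrow> hF (F1 @ F2) = fplus (hF F1) (hF F2))
   \<and> (\<forall>C1 C2. is_context C1 \<and> is_context C2 \<longrightarrow> hC (subst C1 C2) = ccomp (hC C1) (hC C2))
   \<and> (\<forall>C F. is_context C \<and> is_forest F \<longrightarrow> hF (subst C F) = capp (hC C) (hF F))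
   \<and> (\<forall>F C. is_forest F \<and> is_context C \<longrightarrow> hC (F @ C) = fcplus (hF F) (hC C))
   \<and> (\<forall>C F. is_context C \<and> is_forest F \<longrightarrow> hC (C @ F) = cfplus (hC C) (hF F))"

end

theory Submission
  imports Defs
begin

text \<open>
  Validity of a run is a conjunction of local conditions, one for each node (relating its
  transition to the transitions of its children), together with the matching of consecutive
  roots. Hence a run on a concatenation \<open>F\<^sub>1 @ F\<^sub>2\<close> is exactly a pair of runs on
  \<open>F\<^sub>1\<close> and \<open>F\<^sub>2\<close> that match at the seam, and a run on a tree \<open>a(ts)\<close> is a
  transition at the root on top of a run on \<open>ts\<close>. Runs of the extended automaton on a
  hole-free forest are exactly the runs of \<open>N\<close> with every state wrapped in \<open>Some\<close>, so forest
  and context signatures can be compared through one automaton. Reading off signatures, the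
  signature sets satisfy the equations defining \<open>h\<close>: concatenation becomes \<open>\<oplus>\<close>, and
  \<open>a(ts)\<close>, which is \<open>a\<^sub>\<box>\<close> applied to \<open>ts\<close>, becomes application of the signatures of
  \<open>a\<^sub>\<box>\<close>. As every forest and context is built from holes and trees \<open>a(ts)\<close> by
  concatenation, \<open>h\<close> and the signature map agree by induction on trees.
\<close>

section \<open>Local characterisation of valid runs\<close>

lemma pre_self_post_simps [simp]:
  "pre (p, s, q) = p" "self (p, s, q) = s" "post (p, s, q) = q"
  by (simp_all add: pre_def self_def post_def)

lemma trans_collapse [simp]: "(pre t, self t, post t) = t"
  by (simp add: pre_def self_def post_def)

lemma subf_Cons:
  "subf F (i # p) =
     (if i < length F then
        (if p = [] then Some (F ! i)
         else case F ! i of Node a ts \<Rightarrow> subf ts p | Hole \<Rightarrow> None)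
      else None)"
  by (cases p) auto

declare subf.simps(2) [simp del]

lemma subf_Nil [simp]: "subf [] v = None"
  by (cases v) (simp_all add: subf_Cons)

lemma subf_SomeD: "subf F v = Some t \<Longrightarrow> v \<noteq> [] \<and> hd v < length F"
  by (cases v) (auto simp: subf_Cons split: if_splits)

lemma root_in_nodes_iff [simp]: "[i] \<in> nodes F \<longleftrightarrow> i < length F"
  by (simp add: nodes_def subf_Cons)

lemma snoc_in_nodes:
  "p @ [k] \<in> nodes F \<longleftrightarrow> (p = [] \<and> k < length F) \<or> (\<exists>t. subf F p = Some t \<and> k < nchild t)"
proof (induction p arbitrary: F)
  case Nil
  then show ?case by (simp add: nodes_def subf_Cons)
next
  case (Cons i p)
  show ?case
  proof (cases "i < length F")
    case True
    then show ?thesis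
      using Cons.IH by (cases "F ! i") (auto simp: nodes_def subf_Cons)
  qed (simp add: nodes_def subf_Cons)
qed

definition siblings_chained :: "(nat list \<Rightarrow> 's trans) \<Rightarrow> nat list \<Rightarrow> nat \<Rightarrow> bool" where
  "siblings_chained r v n \<longleftrightarrow> (\<forall>i. Suc i < n \<longrightarrow> pre (r (v @ [Suc i])) = post (r (v @ [i])))"

definition node_ok ::
  "'s trans set \<Rightarrow> ('a option \<Rightarrow> 's set) \<Rightarrow> (nat list \<Rightarrow> 's trans) \<Rightarrow> nat list \<Rightarrow> 'a tree \<Rightarrow> bool" where
  "node_ok \<Delta> I r v t \<longleftrightarrow>
     r v \<in> \<Delta>
   \<and> (nchild t = 0 \<longrightarrow> self (r v) \<in> I (lab t))
   \<and> (nchild t > 0 \<longrightarrow> pre (r (v @ [0])) \<in> I (lab t) \<and> self (r v) = post (r (v @ [nchild t - 1])))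
   \<and> siblings_chained r v (nchild t)"

lemma valid_run_iff_node_ok:
  "valid_run \<Delta> I F r \<longleftrightarrow>
     siblings_chained r [] (length F) \<and> (\<forall>v t. subf F v = Some t \<longrightarrow> node_ok \<Delta> I r v t)"
proof -
  have next_sibling: "p @ [Suc i] \<in> nodes F \<longleftrightarrow>
      (p = [] \<and> Suc i < length F) \<or> (\<exists>t. subf F p = Some t \<and> Suc i < nchild t)" for p i
    by (rule snoc_in_nodes)
  have first_child:
    "p \<noteq> [] \<and> p @ [0] \<in> nodes F \<and> subf F p = Some t \<longleftrightarrow> subf F p = Some t \<and> 0 < nchild t" for p t
    using subf_SomeD[of F p t] by (auto simp: snoc_in_nodes)
  show ?thesis
    using next_sibling first_child
    unfolding valid_run_def node_ok_def siblings_chained_def nodes_def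
    by (auto 0 4)
qed

lemma valid_run_cong_nodes:
  assumes "\<And>v. v \<in> nodes F \<Longrightarrow> r v = r' v"
  shows "valid_run \<Delta> I F r \<longleftrightarrow> valid_run \<Delta> I F r'"
proof -
  have "node_ok \<Delta> I r v t \<longleftrightarrow> node_ok \<Delta> I r' v t" if "subf F v = Some t" for v t
  proof -
    have "v \<in> nodes F" "\<And>k. k < nchild t \<Longrightarrow> v @ [k] \<in> nodes F"
      using that by (simp add: nodes_def) (use that in \<open>auto simp: snoc_in_nodes\<close>)
    then show ?thesis
      unfolding node_ok_def siblings_chained_def by (simp add: assms)
  qed
  moreover have "siblings_chained r [] (length F) \<longleftrightarrow> siblings_chained r' [] (length F)"
    unfolding siblings_chained_def by (simp add: assms snoc_in_nodes[of "[]", simplified])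
  ultimately show ?thesis
    by (simp add: valid_run_iff_node_ok)
qed

lemma valid_run_Nil [simp]: "valid_run \<Delta> I [] r"
  by (simp add: valid_run_def nodes_def)

section \<open>Runs on concatenated forests\<close>

definition shift_addr :: "nat \<Rightarrow> nat list \<Rightarrow> nat list" where
  "shift_addr n v = (case v of [] \<Rightarrow> [] | i # p \<Rightarrow> (i + n) # p)"

definition join_runs :: "nat \<Rightarrow> (nat list \<Rightarrow> 's) \<Rightarrow> (nat list \<Rightarrow> 's) \<Rightarrow> nat list \<Rightarrow> 's" where
  "join_runs n r1 r2 v = (case v of [] \<Rightarrow> r2 [] | i # p \<Rightarrow> if i < n then r1 v else r2 ((i - n) # p))"

lemma shift_addr_Cons [simp]: "shift_addr n (i # p) = (i + n) # p"
  by (simp add: shift_addr_def)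

lemma join_runs_left [simp]: "i < n \<Longrightarrow> join_runs n r1 r2 (i # p) = r1 (i # p)"
  by (simp add: join_runs_def)

lemma join_runs_right [simp]: "join_runs n r1 r2 ((j + n) # p) = r2 (j # p)"
  by (simp add: join_runs_def)

lemma join_runs_shift [simp]: "join_runs n r1 r2 (shift_addr n v) = r2 v"
  by (cases v) (simp_all add: shift_addr_def join_runs_def)

lemma join_runs_root: "join_runs n r1 r2 [k] = (if k < n then r1 [k] else r2 [k - n])"
  by (simp add: join_runs_def)

lemma join_runs_split: "join_runs n r (\<lambda>v. r (shift_addr n v)) = r"
  by (auto simp: join_runs_def shift_addr_def split: list.split)

lemma ex_join_runs: "(\<exists>r. P r) \<longleftrightarrow> (\<exists>r1 r2. P (join_runs n r1 r2))"
  by (metis join_runs_split)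

lemma join_runs_last:
  "F2 \<noteq> [] \<Longrightarrow> join_runs (length F1) r1 r2 [length F1 + length F2 - Suc 0] = r2 [length F2 - Suc 0]"
  by (cases F2) (simp_all add: join_runs_root)

lemma join_runs_on_left: "subf F1 v = Some t \<Longrightarrow> join_runs (length F1) r1 r2 v = r1 v"
  using subf_SomeD[of F1 v t] by (cases v) auto

lemma subf_append:
  "subf (F1 @ F2) (i # p) =
     (if i < length F1 then subf F1 (i # p) else subf F2 ((i - length F1) # p))"
  by (auto simp: subf_Cons nth_append)

lemma subf_append_left: "subf F1 v = Some t \<Longrightarrow> subf (F1 @ F2) v = Some t"
  using subf_SomeD[of F1 v t] by (cases v) (simp_all add: subf_append)

lemma subf_append_shift: "subf (F1 @ F2) (shift_addr (length F1) v) = subf F2 v"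
  by (cases v) (simp_all add: subf_append shift_addr_def)

lemma subf_appendE:
  assumes "subf (F1 @ F2) v = Some t"
  obtains "subf F1 v = Some t" | w where "v = shift_addr (length F1) w" "subf F2 w = Some t"
proof -
  obtain i p where v: "v = i # p"
    using assms subf_SomeD by (cases v) blast+
  show ?thesis
  proof (cases "i < length F1")
    case True
    then show ?thesis using that assms v by (simp add: subf_append)
  next
    case False
    then have "v = shift_addr (length F1) ((i - length F1) # p)" using v by simp
    then show ?thesis using that assms subf_append_shift by metis
  qed
qed

lemma all_subf_append:
  "(\<forall>v t. subf (F1 @ F2) v = Some t \<longrightarrow> P v t) \<longleftrightarrow>
     (\<forall>v t. subf F1 v = Some t \<longrightarrow> P v t)
   \<and> (\<forall>v t. subf F2 v = Some t \<longrightarrow> P (shift_addr (length F1) v) t)"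
  by (metis subf_appendE subf_append_left subf_append_shift)

lemma adjacent_pairs_append:
  "(\<forall>i. Suc i < n + m \<longrightarrow>
      R (if Suc i < n then a (Suc i) else b (Suc i - n)) (if i < n then a i else b (i - n)))
   \<longleftrightarrow> (\<forall>i. Suc i < n \<longrightarrow> R (a (Suc i)) (a i)) \<and> (\<forall>i. Suc i < m \<longrightarrow> R (b (Suc i)) (b i))
     \<and> (n \<noteq> 0 \<and> m \<noteq> 0 \<longrightarrow> R (b 0) (a (n - 1)))"
  (is "(\<forall>i. ?P i) \<longleftrightarrow> ?R")
proof
  assume H: "\<forall>i. ?P i"
  have "Suc i < n \<Longrightarrow> R (a (Suc i)) (a i)" for i using H[rule_format, of i] by simp
  moreover have "Suc i < m \<Longrightarrow> R (b (Suc i)) (b i)" for i using H[rule_format, of "i + n"] by simp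
  moreover have "n \<noteq> 0 \<Longrightarrow> m \<noteq> 0 \<Longrightarrow> R (b 0) (a (n - 1))" using H[rule_format, of "n - 1"] by simp
  ultimately show ?R by blast
next
  assume R: ?R
  have "?P i" for i
  proof -
    have "Suc i < n \<Longrightarrow> ?P i" "Suc i = n \<Longrightarrow> ?P i" using R by auto
    moreover have "n \<le> i \<Longrightarrow> ?P i" using R by (auto simp: Suc_diff_le)
    ultimately show ?thesis by linarith
  qed
  then show "\<forall>i. ?P i" ..
qed

lemma valid_run_join:
  "valid_run \<Delta> I (F1 @ F2) (join_runs (length F1) r1 r2) \<longleftrightarrow>
     valid_run \<Delta> I F1 r1 \<and> valid_run \<Delta> I F2 r2
   \<and> (F1 \<noteq> [] \<and> F2 \<noteq> [] \<longrightarrow> pre (r2 [0]) = post (r1 [length F1 - 1]))"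
proof -
  define n where "n = length F1"
  let ?r = "join_runs n r1 r2"
  have left: "node_ok \<Delta> I ?r v t \<longleftrightarrow> node_ok \<Delta> I r1 v t" if "subf F1 v = Some t" for v t
    using subf_SomeD[OF that] by (cases v) (simp_all add: n_def node_ok_def siblings_chained_def)
  have right: "node_ok \<Delta> I ?r (shift_addr n v) t \<longleftrightarrow> node_ok \<Delta> I r2 v t" if "v \<noteq> []" for v t
    using that by (cases v) (simp_all add: node_ok_def siblings_chained_def)
  have roots: "siblings_chained ?r [] (n + length F2) \<longleftrightarrow>
      siblings_chained r1 [] n \<and> siblings_chained r2 [] (length F2)
    \<and> (n \<noteq> 0 \<and> F2 \<noteq> [] \<longrightarrow> pre (r2 [0]) = post (r1 [n - 1]))"
    using adjacent_pairs_append[of n "length F2" "\<lambda>x y. pre x = post y" "\<lambda>k. r1 [k]" "\<lambda>k. r2 [k]"]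
    by (simp add: siblings_chained_def join_runs_root)
  have nodes1: "(\<forall>v t. subf F1 v = Some t \<longrightarrow> node_ok \<Delta> I ?r v t) \<longleftrightarrow>
      (\<forall>v t. subf F1 v = Some t \<longrightarrow> node_ok \<Delta> I r1 v t)"
    using left by blast
  have nodes2: "(\<forall>v t. subf F2 v = Some t \<longrightarrow> node_ok \<Delta> I ?r (shift_addr n v) t) \<longleftrightarrow>
      (\<forall>v t. subf F2 v = Some t \<longrightarrow> node_ok \<Delta> I r2 v t)"
    using right subf_SomeD by blast
  show ?thesis
    unfolding valid_run_iff_node_ok all_subf_append length_append n_def[symmetric] nodes1 nodes2 roots
    by (auto simp: n_def)
qed

section \<open>Runs on a single tree\<close>

lemma subf_Node_Some_iff:
  "subf [Node a ts] v = Some t \<longleftrightarrow> (v = [0] \<and> t = Node a ts) \<or> (\<exists>w. v = 0 # w \<and> subf ts w = Some t)"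
  using subf_SomeD[of ts _ t] by (cases v) (auto simp: subf_Cons)

lemma subf_Hole_Some_iff: "subf [Hole] v = Some t \<longleftrightarrow> v = [0] \<and> t = Hole"
  by (cases v) (auto simp: subf_Cons split: if_splits)

lemma valid_run_Node:
  "valid_run \<Delta> I [Node a ts] r \<longleftrightarrow>
     r [0] \<in> \<Delta>
   \<and> (ts = [] \<longrightarrow> self (r [0]) \<in> I (Some a))
   \<and> (ts \<noteq> [] \<longrightarrow> pre (r [0, 0]) \<in> I (Some a) \<and> self (r [0]) = post (r [0, length ts - 1]))
   \<and> valid_run \<Delta> I ts (\<lambda>w. r (0 # w))"
proof -
  have "node_ok \<Delta> I r (0 # w) t \<longleftrightarrow> node_ok \<Delta> I (\<lambda>w. r (0 # w)) w t" if "subf ts w = Some t" for w t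
    by (simp add: node_ok_def siblings_chained_def)
  then have nodes: "(\<forall>v t. subf [Node a ts] v = Some t \<longrightarrow> node_ok \<Delta> I r v t) \<longleftrightarrow>
      node_ok \<Delta> I r [0] (Node a ts)
    \<and> (\<forall>w t. subf ts w = Some t \<longrightarrow> node_ok \<Delta> I (\<lambda>w. r (0 # w)) w t)"
    unfolding subf_Node_Some_iff by auto
  have "siblings_chained r [0] n \<longleftrightarrow> siblings_chained (\<lambda>w. r (0 # w)) [] n" for n
    by (simp add: siblings_chained_def)
  moreover have "siblings_chained r [] (length [Node a ts])"
    by (simp add: siblings_chained_def)
  ultimately show ?thesis
    unfolding valid_run_iff_node_ok nodes node_ok_def[of \<Delta> I r "[0]"] by auto
qed

lemma valid_run_Hole: "valid_run \<Delta> I [Hole] r \<longleftrightarrow> r [0] \<in> \<Delta> \<and> self (r [0]) \<in> I None"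
  by (simp add: valid_run_iff_node_ok subf_Hole_Some_iff node_ok_def siblings_chained_def)

definition node_run :: "'s \<Rightarrow> (nat list \<Rightarrow> 's) \<Rightarrow> nat list \<Rightarrow> 's" where
  "node_run T r v = (if v = [0] then T else r (tl v))"

lemma valid_run_node_run:
  "valid_run \<Delta> I [Node a ts] (node_run T r) \<longleftrightarrow>
     T \<in> \<Delta>
   \<and> (ts = [] \<longrightarrow> self T \<in> I (Some a))
   \<and> (ts \<noteq> [] \<longrightarrow> pre (r [0]) \<in> I (Some a) \<and> self T = post (r [length ts - 1]))
   \<and> valid_run \<Delta> I ts r"
proof -
  have "valid_run \<Delta> I ts (\<lambda>w. node_run T r (0 # w)) \<longleftrightarrow> valid_run \<Delta> I ts r"
    by (rule valid_run_cong_nodes) (auto simp: node_run_def nodes_def)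
  then show ?thesis
    by (simp add: valid_run_Node node_run_def)
qed

section \<open>Runs of the extended automaton on forests\<close>

lemma subf_Hole_holes_pos: "subf F v = Some Hole \<Longrightarrow> 0 < holes F"
proof (induction v arbitrary: F)
  case (Cons i p)
  then have i: "i < length F" and le: "holes_t (F ! i) \<le> holes F"
    using elem_le_sum_list[of i "map holes_t F"] by (auto simp: holes_def subf_Cons split: if_splits)
  show ?case
  proof (cases "F ! i")
    case (Node a ts)
    then have "p \<noteq> []" "subf ts p = Some Hole" using Cons.prems i by (auto simp: subf_Cons split: if_splits)
    then show ?thesis using Cons.IH[of ts] Node le by (simp add: holes_def)
  qed (use le in simp)
qed simp

lemma is_forest_no_Hole: "is_forest F \<Longrightarrow> subf F v \<noteq> Some Hole"
  using subf_Hole_holes_pos by (fastforce simp: is_forest_def)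

lemma is_context_not_Nil: "is_context C \<Longrightarrow> C \<noteq> []"
  by (auto simp: is_context_def holes_def)

lemma delta_ext_Some_iff [simp]: "(Some p, Some s, Some q) \<in> delta_ext \<delta> \<longleftrightarrow> (p, s, q) \<in> \<delta>"
  by (auto simp: delta_ext_def)

lemma delta_ext_pre_post_Some:
  "t \<in> delta_ext \<delta> \<Longrightarrow> (\<exists>p. pre t = Some p) \<and> (\<exists>q. post t = Some q)"
  by (auto simp: delta_ext_def)

lemma init_ext_Some [simp]: "init_ext Init (Some a) = Some ` Init a"
  by (simp add: init_ext_def)

lemma init_forest_Some [simp]: "init_forest Init (Some a) = Init a"
  by (simp add: init_forest_def)

lemma Some_in_init_ext_iff [simp]: "Some x \<in> init_ext Init l \<longleftrightarrow> x \<in> init_forest Init l"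
  by (cases l) (auto simp: init_ext_def init_forest_def)

definition lift_trans :: "'q trans \<Rightarrow> 'q option trans" where
  "lift_trans t = (Some (pre t), Some (self t), Some (post t))"

definition lower_trans :: "'q option trans \<Rightarrow> 'q trans" where
  "lower_trans t = (the (pre t), the (self t), the (post t))"

lemma valid_run_lift_iff:
  "valid_run (delta_ext \<delta>) (init_ext Init) F (\<lambda>v. lift_trans (r v)) \<longleftrightarrow>
   valid_run \<delta> (init_forest Init) F r"
  by (simp add: valid_run_def lift_trans_def)

lemma ext_run_pre_post_Some:
  assumes "valid_run (delta_ext \<delta>) I F r" "v \<in> nodes F"
  shows "\<exists>p. pre (r v) = Some p" "\<exists>q. post (r v) = Some q"
proof -
  have "r v \<in> delta_ext \<delta>" using assms by (simp add: valid_run_def)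
  then show "\<exists>p. pre (r v) = Some p" "\<exists>q. post (r v) = Some q"
    using delta_ext_pre_post_Some by blast+
qed

text \<open>On a forest without holes, the fresh state never occurs in a run of the extended automaton.\<close>
lemma ext_run_lift_lower:
  assumes F: "is_forest F" and r: "valid_run (delta_ext \<delta>) (init_ext Init) F r" and v: "v \<in> nodes F"
  shows "lift_trans (lower_trans (r v)) = r v"
proof -
  obtain t where t: "subf F v = Some t" using v by (auto simp: nodes_def)
  then obtain a ts where Node: "t = Node a ts" using is_forest_no_Hole[OF F] by (cases t) auto
  have ok: "node_ok (delta_ext \<delta>) (init_ext Init) r v t" using r t by (simp add: valid_run_iff_node_ok)
  have "\<exists>s. self (r v) = Some s"
  proof (cases "ts = []")
    case False
    then have "v @ [length ts - 1] \<in> nodes F" using t Node by (simp add: snoc_in_nodes)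
    from ext_run_pre_post_Some(2)[OF r this] show ?thesis
      using ok Node False by (simp add: node_ok_def)
  qed (use ok Node in \<open>auto simp: node_ok_def\<close>)
  then obtain p s q where "r v = (Some p, Some s, Some q)"
    using ext_run_pre_post_Some[OF r v] trans_collapse[of "r v"] by metis
  then show ?thesis
    by (simp add: lift_trans_def lower_trans_def)
qed

lemma forest_sigs_ext_runs:
  assumes F: "is_forest F" "F \<noteq> []"
  shows "forest_sigs \<delta> Init F = {(p, q). \<exists>r. valid_run (delta_ext \<delta>) (init_ext Init) F r
           \<and> pre (r [0]) = Some p \<and> post (r [length F - 1]) = Some q}"
proof (intro set_eqI iffI)
  fix x assume "x \<in> forest_sigs \<delta> Init F"
  then obtain r where r: "valid_run \<delta> (init_forest Init) F r"
    and x: "x = (pre (r [0]), post (r [length F - 1]))"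
    by (auto simp: forest_sigs_def)
  from r have "valid_run (delta_ext \<delta>) (init_ext Init) F (\<lambda>v. lift_trans (r v))"
    by (simp add: valid_run_lift_iff)
  then show "x \<in> {(p, q). \<exists>r. valid_run (delta_ext \<delta>) (init_ext Init) F r
           \<and> pre (r [0]) = Some p \<and> post (r [length F - 1]) = Some q}"
    unfolding x by (auto simp: lift_trans_def intro!: exI[of _ "\<lambda>v. lift_trans (r v)"])
next
  fix x assume "x \<in> {(p, q). \<exists>r. valid_run (delta_ext \<delta>) (init_ext Init) F r
           \<and> pre (r [0]) = Some p \<and> post (r [length F - 1]) = Some q}"
  then obtain r p q where r: "valid_run (delta_ext \<delta>) (init_ext Init) F r" and x: "x = (p, q)"
    and pq: "pre (r [0]) = Some p" "post (r [length F - 1]) = Some q"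
    by blast
  have "valid_run (delta_ext \<delta>) (init_ext Init) F (\<lambda>v. lift_trans (lower_trans (r v)))"
    using r by (subst valid_run_cong_nodes[where r' = r]) (simp_all add: ext_run_lift_lower[OF F(1) r])
  then have "valid_run \<delta> (init_forest Init) F (\<lambda>v. lower_trans (r v))"
    by (simp add: valid_run_lift_iff)
  then show "x \<in> forest_sigs \<delta> Init F"
    using pq unfolding x forest_sigs_def
    by (auto simp: lower_trans_def intro!: exI[of _ "\<lambda>v. lower_trans (r v)"])
qed

section \<open>Signature sets\<close>

lemma subf_forest_append_Hole:
  "is_forest F \<Longrightarrow> subf (F @ C) v = Some Hole \<longleftrightarrow> (\<exists>w. v = shift_addr (length F) w \<and> subf C w = Some Hole)"
  by (metis subf_appendE subf_append_shift is_forest_no_Hole)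

lemma subf_append_forest_Hole:
  "is_forest F \<Longrightarrow> subf (C @ F) v = Some Hole \<longleftrightarrow> subf C v = Some Hole"
  by (metis subf_appendE subf_append_left is_forest_no_Hole)

lemma forest_sigs_append:
  assumes "F1 \<noteq> []" "F2 \<noteq> []"
  shows "forest_sigs \<delta> Init (F1 @ F2) = fplus (forest_sigs \<delta> Init F1) (forest_sigs \<delta> Init F2)"
proof -
  have "(p, q) \<in> forest_sigs \<delta> Init (F1 @ F2) \<longleftrightarrow>
      (\<exists>r1 r2. valid_run \<delta> (init_forest Init) F1 r1 \<and> valid_run \<delta> (init_forest Init) F2 r2
        \<and> pre (r2 [0]) = post (r1 [length F1 - 1]) \<and> pre (r1 [0]) = p \<and> post (r2 [length F2 - 1]) = q)"
    for p q
    unfolding forest_sigs_def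
    by (subst ex_join_runs[where n = "length F1"]) (simp add: assms valid_run_join join_runs_last)
  then show ?thesis
    by (auto simp: fplus_def forest_sigs_def)
qed

lemma ctx_sigs_forest_append:
  assumes F: "is_forest F" "F \<noteq> []" and C: "C \<noteq> []"
  shows "ctx_sigs \<delta> Init (F @ C) = fcplus (forest_sigs \<delta> Init F) (ctx_sigs \<delta> Init C)"
proof -
  let ?ext = "valid_run (delta_ext \<delta>) (init_ext Init)"
  have split: "((p, q), (r, s)) \<in> ctx_sigs \<delta> Init (F @ C) \<longleftrightarrow>
      (\<exists>r1 r2 w. ?ext F r1 \<and> ?ext C r2 \<and> pre (r2 [0]) = post (r1 [length F - 1])
        \<and> subf C w = Some Hole \<and> pre (r1 [0]) = Some p \<and> post (r2 [length C - 1]) = Some q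
        \<and> pre (r2 w) = Some r \<and> post (r2 w) = Some s)"
    for p q r s
    unfolding ctx_sigs_def
    by (subst ex_join_runs[where n = "length F"])
      (fastforce simp: F C valid_run_join join_runs_last subf_forest_append_Hole)
  show ?thesis
  proof (intro set_eqI iffI)
    fix x assume x_in: "x \<in> ctx_sigs \<delta> Init (F @ C)"
    obtain p q r s where x: "x = ((p, q), (r, s))" by (metis surj_pair)
    from x_in obtain r1 r2 w where r1: "?ext F r1" "pre (r1 [0]) = Some p"
      and r2: "?ext C r2" "subf C w = Some Hole" "post (r2 [length C - 1]) = Some q"
        "pre (r2 w) = Some r" "post (r2 w) = Some s"
      and mid: "pre (r2 [0]) = post (r1 [length F - 1])"
      unfolding x split by blast
    obtain m where m: "post (r1 [length F - 1]) = Some m"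
      using ext_run_pre_post_Some(2)[OF r1(1), of "[length F - 1]"] F(2) by auto
    have "(p, m) \<in> forest_sigs \<delta> Init F"
      using r1 m by (auto simp: forest_sigs_ext_runs[OF F])
    moreover have "((m, q), (r, s)) \<in> ctx_sigs \<delta> Init C"
      using r2 mid m unfolding ctx_sigs_def by auto
    ultimately show "x \<in> fcplus (forest_sigs \<delta> Init F) (ctx_sigs \<delta> Init C)"
      unfolding x fcplus_def by blast
  next
    fix x assume "x \<in> fcplus (forest_sigs \<delta> Init F) (ctx_sigs \<delta> Init C)"
    then obtain p m q r s where x: "x = ((p, q), (r, s))" and "(p, m) \<in> forest_sigs \<delta> Init F"
      and "((m, q), (r, s)) \<in> ctx_sigs \<delta> Init C"
      unfolding fcplus_def by blast
    then show "x \<in> ctx_sigs \<delta> Init (F @ C)"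
      unfolding x split by (fastforce simp: forest_sigs_ext_runs[OF F] ctx_sigs_def)
  qed
qed

lemma ctx_sigs_append_forest:
  assumes C: "C \<noteq> []" and F: "is_forest F" "F \<noteq> []"
  shows "ctx_sigs \<delta> Init (C @ F) = cfplus (ctx_sigs \<delta> Init C) (forest_sigs \<delta> Init F)"
proof -
  let ?ext = "valid_run (delta_ext \<delta>) (init_ext Init)"
  have split: "((p, q), (r, s)) \<in> ctx_sigs \<delta> Init (C @ F) \<longleftrightarrow>
      (\<exists>r1 r2 w. ?ext C r1 \<and> ?ext F r2 \<and> pre (r2 [0]) = post (r1 [length C - 1])
        \<and> subf C w = Some Hole \<and> pre (r1 [0]) = Some p \<and> post (r2 [length F - 1]) = Some q
        \<and> pre (r1 w) = Some r \<and> post (r1 w) = Some s)"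
    for p q r s
    unfolding ctx_sigs_def
    by (subst ex_join_runs[where n = "length C"])
      (fastforce simp: F C valid_run_join join_runs_last subf_append_forest_Hole join_runs_on_left)
  show ?thesis
  proof (intro set_eqI iffI)
    fix x assume x_in: "x \<in> ctx_sigs \<delta> Init (C @ F)"
    obtain p q r s where x: "x = ((p, q), (r, s))" by (metis surj_pair)
    from x_in obtain r1 r2 w where r1: "?ext C r1" "subf C w = Some Hole" "pre (r1 [0]) = Some p"
        "pre (r1 w) = Some r" "post (r1 w) = Some s"
      and r2: "?ext F r2" "post (r2 [length F - 1]) = Some q"
      and mid: "pre (r2 [0]) = post (r1 [length C - 1])"
      unfolding x split by blast
    obtain m where m: "post (r1 [length C - 1]) = Some m"
      using ext_run_pre_post_Some(2)[OF r1(1), of "[length C - 1]"] C by auto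
    have "((p, m), (r, s)) \<in> ctx_sigs \<delta> Init C"
      using r1 m unfolding ctx_sigs_def by auto
    moreover have "(m, q) \<in> forest_sigs \<delta> Init F"
      using r2 mid m by (auto simp: forest_sigs_ext_runs[OF F])
    ultimately show "x \<in> cfplus (ctx_sigs \<delta> Init C) (forest_sigs \<delta> Init F)"
      unfolding x cfplus_def by blast
  next
    fix x assume "x \<in> cfplus (ctx_sigs \<delta> Init C) (forest_sigs \<delta> Init F)"
    then obtain p m q r s where x: "x = ((p, q), (r, s))" and "((p, m), (r, s)) \<in> ctx_sigs \<delta> Init C"
      and "(m, q) \<in> forest_sigs \<delta> Init F"
      unfolding cfplus_def by blast
    then show "x \<in> ctx_sigs \<delta> Init (C @ F)"
      unfolding x split by (fastforce simp: forest_sigs_ext_runs[OF F] ctx_sigs_def)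
  qed
qed

text \<open>
  \<open>forest_sigs \<delta> Init []\<close> is a junk value (\<open>run [0]\<close> is unconstrained on the empty forest);
  \<open>fsigs\<close> replaces it by \<open>Id\<close>, the value of the homomorphism on the empty forest.
\<close>
definition fsigs :: "'q trans set \<Rightarrow> ('a \<Rightarrow> 'q set) \<Rightarrow> 'a forest \<Rightarrow> ('q \<times> 'q) set" where
  "fsigs \<delta> Init F = (if F = [] then Id else forest_sigs \<delta> Init F)"

lemma forest_sigs_Node:
  "forest_sigs \<delta> Init [Node a ts] =
     {(p, q). \<exists>r s. (p, s, q) \<in> \<delta> \<and> r \<in> Init a \<and> (r, s) \<in> fsigs \<delta> Init ts}"
proof (intro set_eqI iffI)
  fix x assume "x \<in> forest_sigs \<delta> Init [Node a ts]"
  then obtain R where R: "valid_run \<delta> (init_forest Init) [Node a ts] R"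
    and x: "x = (pre (R [0]), post (R [0]))"
    by (auto simp: forest_sigs_def)
  have "(pre (R [0]), self (R [0]), post (R [0])) \<in> \<delta>"
    using R by (simp add: valid_run_Node)
  moreover have "\<exists>r. r \<in> Init a \<and> (r, self (R [0])) \<in> fsigs \<delta> Init ts"
  proof (cases "ts = []")
    case False
    then have "(pre (R [0, 0]), self (R [0])) \<in> forest_sigs \<delta> Init ts"
      using R unfolding forest_sigs_def valid_run_Node by auto
    then show ?thesis
      using R False by (auto simp: fsigs_def valid_run_Node)
  qed (use R in \<open>simp add: fsigs_def valid_run_Node\<close>)
  ultimately show "x \<in> {(p, q). \<exists>r s. (p, s, q) \<in> \<delta> \<and> r \<in> Init a \<and> (r, s) \<in> fsigs \<delta> Init ts}"
    unfolding x by blast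
next
  fix x assume "x \<in> {(p, q). \<exists>r s. (p, s, q) \<in> \<delta> \<and> r \<in> Init a \<and> (r, s) \<in> fsigs \<delta> Init ts}"
  then obtain p q r s where x: "x = (p, q)" and T: "(p, s, q) \<in> \<delta>" "r \<in> Init a"
    and rs: "(r, s) \<in> fsigs \<delta> Init ts"
    by blast
  obtain R where "valid_run \<delta> (init_forest Init) ts R"
    and "ts \<noteq> [] \<Longrightarrow> pre (R [0]) = r \<and> post (R [length ts - 1]) = s" and "ts = [] \<Longrightarrow> r = s"
    using rs by (cases "ts = []") (auto simp: fsigs_def forest_sigs_def)
  with T have "valid_run \<delta> (init_forest Init) [Node a ts] (node_run (p, s, q) R)"
    by (auto simp: valid_run_node_run)
  then show "x \<in> forest_sigs \<delta> Init [Node a ts]"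
    unfolding x forest_sigs_def by (force simp: node_run_def)
qed

lemma ctx_sigs_Node:
  assumes ts: "ts \<noteq> []"
  shows "ctx_sigs \<delta> Init [Node a ts] =
     {((p, q), (r', s')). \<exists>r s. (p, s, q) \<in> \<delta> \<and> r \<in> Init a \<and> ((r, s), (r', s')) \<in> ctx_sigs \<delta> Init ts}"
proof (intro set_eqI iffI)
  let ?ext = "valid_run (delta_ext \<delta>) (init_ext Init)"
  fix x assume "x \<in> ctx_sigs \<delta> Init [Node a ts]"
  then obtain R hp p q r' s' where R: "?ext [Node a ts] R" and hp: "subf [Node a ts] hp = Some Hole"
    and x: "x = ((p, q), (r', s'))" and pq: "pre (R [0]) = Some p" "post (R [0]) = Some q"
    and rs': "pre (R hp) = Some r'" "post (R hp) = Some s'"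
    by (auto simp: ctx_sigs_def)
  obtain w where w: "hp = 0 # w" "subf ts w = Some Hole"
    using hp by (auto simp: subf_Node_Some_iff)
  have R0: "R [0] \<in> delta_ext \<delta>" "pre (R [0, 0]) \<in> Some ` Init a"
    "self (R [0]) = post (R [0, length ts - 1])" and Rts: "?ext ts (\<lambda>w. R (0 # w))"
    using R ts by (simp_all add: valid_run_Node)
  obtain r where r: "pre (R [0, 0]) = Some r" "r \<in> Init a"
    using R0(2) by auto
  obtain s where s: "post (R [0, length ts - 1]) = Some s"
    using ext_run_pre_post_Some(2)[OF Rts, of "[length ts - 1]"] ts by auto
  have "R [0] = (Some p, Some s, Some q)"
    using pq R0(3) s trans_collapse[of "R [0]"] by simp
  then have "(p, s, q) \<in> \<delta>"
    using R0(1) by simp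
  moreover have "((r, s), (r', s')) \<in> ctx_sigs \<delta> Init ts"
    unfolding ctx_sigs_def using Rts w r s rs' by auto
  ultimately show "x \<in> {((p, q), (r', s')). \<exists>r s. (p, s, q) \<in> \<delta> \<and> r \<in> Init a
                      \<and> ((r, s), (r', s')) \<in> ctx_sigs \<delta> Init ts}"
    unfolding x using r(2) by blast
next
  fix x assume "x \<in> {((p, q), (r', s')). \<exists>r s. (p, s, q) \<in> \<delta> \<and> r \<in> Init a
                   \<and> ((r, s), (r', s')) \<in> ctx_sigs \<delta> Init ts}"
  then obtain p q r s r' s' R w where x: "x = ((p, q), (r', s'))" and T: "(p, s, q) \<in> \<delta>" "r \<in> Init a"
    and R: "valid_run (delta_ext \<delta>) (init_ext Init) ts R" "subf ts w = Some Hole"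
      "pre (R [0]) = Some r" "post (R [length ts - 1]) = Some s"
      "pre (R w) = Some r'" "post (R w) = Some s'"
    by (auto simp: ctx_sigs_def)
  have "valid_run (delta_ext \<delta>) (init_ext Init) [Node a ts] (node_run (Some p, Some s, Some q) R)"
    using ts T R by (simp add: valid_run_node_run)
  moreover have "w \<noteq> []"
    using R(2) subf_SomeD by blast
  moreover have "subf [Node a ts] (0 # w) = Some Hole"
    using R(2) by (simp add: subf_Node_Some_iff)
  ultimately show "x \<in> ctx_sigs \<delta> Init [Node a ts]"
    unfolding x ctx_sigs_def using R(5,6) by (force simp: node_run_def)
qed

lemma ctx_sigs_Hole:
  fixes Init :: "'a \<Rightarrow> 'q set"
  shows "ctx_sigs \<delta> Init [Hole] = Id"
proof (intro set_eqI iffI)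
  fix x assume "x \<in> ctx_sigs \<delta> Init [Hole]"
  then obtain R hp p q r s where "subf ([Hole] :: 'a forest) hp = Some Hole" and "x = ((p, q), (r, s))"
    and "pre (R [0]) = Some p" "post (R [0]) = Some q" "pre (R hp) = Some r" "post (R hp) = Some s"
    by (auto simp: ctx_sigs_def)
  then show "x \<in> Id" by (auto simp: subf_Hole_Some_iff)
next
  fix x :: "('q \<times> 'q) \<times> ('q \<times> 'q)" assume "x \<in> Id"
  then obtain p q where x: "x = ((p, q), (p, q))" by auto
  have "valid_run (delta_ext \<delta>) (init_ext Init) ([Hole] :: 'a forest) (\<lambda>_. (Some p, None, Some q))"
    by (simp add: valid_run_Hole delta_ext_def init_ext_def)
  then show "x \<in> ctx_sigs \<delta> Init [Hole]"
    unfolding x ctx_sigs_def by (auto simp: subf_Hole_Some_iff)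
qed

lemma ctx_sigs_box_ctx:
  "ctx_sigs \<delta> Init (box_ctx a) = {((p, q), (r, s)). (p, s, q) \<in> \<delta> \<and> r \<in> Init a}"
  by (simp add: box_ctx_def ctx_sigs_Node ctx_sigs_Hole)

lemma fplus_Id_left [simp]: "fplus Id F = F" and fplus_Id_right [simp]: "fplus F Id = F"
  by (auto simp: fplus_def)

lemma fcplus_Id_left [simp]: "fcplus Id C = C"
  by (force simp: fcplus_def)

lemma cfplus_Id_right [simp]: "cfplus C Id = C"
  by (force simp: cfplus_def)

lemma fsigs_append: "fsigs \<delta> Init (F1 @ F2) = fplus (fsigs \<delta> Init F1) (fsigs \<delta> Init F2)"
  by (simp add: fsigs_def forest_sigs_append)

lemma ctx_sigs_forest_append_fcplus:
  "is_forest F \<Longrightarrow> is_context C \<Longrightarrow>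
   ctx_sigs \<delta> Init (F @ C) = fcplus (fsigs \<delta> Init F) (ctx_sigs \<delta> Init C)"
  by (simp add: fsigs_def ctx_sigs_forest_append is_context_not_Nil)

lemma ctx_sigs_append_forest_cfplus:
  "is_context C \<Longrightarrow> is_forest F \<Longrightarrow>
   ctx_sigs \<delta> Init (C @ F) = cfplus (ctx_sigs \<delta> Init C) (fsigs \<delta> Init F)"
  by (simp add: fsigs_def ctx_sigs_append_forest is_context_not_Nil)

lemma fsigs_Node_capp: "fsigs \<delta> Init [Node a ts] = capp (ctx_sigs \<delta> Init (box_ctx a)) (fsigs \<delta> Init ts)"
  by (auto simp: fsigs_def forest_sigs_Node ctx_sigs_box_ctx capp_def)

lemma ctx_sigs_Node_ccomp:
  "ts \<noteq> [] \<Longrightarrow> ctx_sigs \<delta> Init [Node a ts] = ccomp (ctx_sigs \<delta> Init (box_ctx a)) (ctx_sigs \<delta> Init ts)"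
  by (fastforce simp: ctx_sigs_Node ctx_sigs_box_ctx ccomp_def)

section \<open>Agreement with the homomorphism\<close>

lemma subst_box_ctx [simp]: "subst (box_ctx a) F = [Node a F]"
  by (simp add: subst_def box_ctx_def)

lemma is_context_box_ctx: "is_context (box_ctx a)"
  by (simp add: box_ctx_def is_context_def holes_def)

lemma is_homD:
  assumes "is_hom hF hC"
  shows "hF [] = Id" "hC [Hole] = Id"
    "is_forest F1 \<Longrightarrow> is_forest F2 \<Longrightarrow> hF (F1 @ F2) = fplus (hF F1) (hF F2)"
    "is_context C1 \<Longrightarrow> is_context C2 \<Longrightarrow> hC (subst C1 C2) = ccomp (hC C1) (hC C2)"
    "is_context C \<Longrightarrow> is_forest F \<Longrightarrow> hF (subst C F) = capp (hC C) (hF F)"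
    "is_forest F \<Longrightarrow> is_context C \<Longrightarrow> hC (F @ C) = fcplus (hF F) (hC C)"
    "is_context C \<Longrightarrow> is_forest F \<Longrightarrow> hC (C @ F) = cfplus (hC C) (hF F)"
  using assms by (simp_all add: is_hom_def)

definition sigs_agree ::
  "('a forest \<Rightarrow> ('q \<times> 'q) set) \<Rightarrow> ('a forest \<Rightarrow> (('q \<times> 'q) \<times> ('q \<times> 'q)) set) \<Rightarrow>
   'q trans set \<Rightarrow> ('a \<Rightarrow> 'q set) \<Rightarrow> 'a forest \<Rightarrow> bool" where
  "sigs_agree hF hC \<delta> Init F \<longleftrightarrow>
     (is_forest F \<longrightarrow> hF F = fsigs \<delta> Init F) \<and> (is_context F \<longrightarrow> hC F = ctx_sigs \<delta> Init F)"

lemma sigs_agree_Hole: "is_hom hF hC \<Longrightarrow> sigs_agree hF hC \<delta> Init [Hole]"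
  by (simp add: sigs_agree_def is_forest_def holes_def is_homD ctx_sigs_Hole)

lemma sigs_agree_append:
  assumes hom: "is_hom hF hC"
    and F1: "sigs_agree hF hC \<delta> Init F1" and F2: "sigs_agree hF hC \<delta> Init F2"
  shows "sigs_agree hF hC \<delta> Init (F1 @ F2)"
proof -
  have holes: "holes (F1 @ F2) = holes F1 + holes F2"
    by (simp add: holes_def)
  have "hC (F1 @ F2) = ctx_sigs \<delta> Init (F1 @ F2)" if "is_context (F1 @ F2)"
  proof -
    from that holes consider "is_forest F1" "is_context F2" | "is_context F1" "is_forest F2"
      by (auto simp: is_forest_def is_context_def add_is_1)
    then show ?thesis
      by cases (use F1 F2 in \<open>simp_all add: sigs_agree_def is_homD[OF hom]
        ctx_sigs_forest_append_fcplus ctx_sigs_append_forest_cfplus\<close>)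
  qed
  moreover have "hF (F1 @ F2) = fsigs \<delta> Init (F1 @ F2)" if "is_forest (F1 @ F2)"
    using that holes F1 F2 by (simp add: is_forest_def sigs_agree_def is_homD[OF hom] fsigs_append)
  ultimately show ?thesis
    by (simp add: sigs_agree_def)
qed

lemma sigs_agree_if_trees:
  "is_hom hF hC \<Longrightarrow> (\<And>t. t \<in> set F \<Longrightarrow> sigs_agree hF hC \<delta> Init [t]) \<Longrightarrow> sigs_agree hF hC \<delta> Init F"
proof (induction F)
  case Nil
  then show ?case by (simp add: sigs_agree_def is_context_def holes_def is_homD fsigs_def)
next
  case (Cons t F)
  then show ?case using sigs_agree_append[of hF hC \<delta> Init "[t]" F] by simp
qed

lemma sigs_agree_Node:
  assumes hom: "is_hom hF hC" and box: "hC (box_ctx a) = ctx_sigs \<delta> Init (box_ctx a)"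
    and ts: "sigs_agree hF hC \<delta> Init ts"
  shows "sigs_agree hF hC \<delta> Init [Node a ts]"
proof -
  have holes: "holes [Node a ts] = holes ts"
    by (simp add: holes_def)
  have "hF [Node a ts] = fsigs \<delta> Init [Node a ts]" if "is_forest [Node a ts]"
    using that holes ts box is_homD(5)[OF hom is_context_box_ctx]
    by (simp add: is_forest_def sigs_agree_def fsigs_Node_capp)
  moreover have "hC [Node a ts] = ctx_sigs \<delta> Init [Node a ts]" if "is_context [Node a ts]"
  proof -
    have "is_context ts"
      using that holes by (simp add: is_context_def)
    then show ?thesis
      using ts box is_homD(4)[OF hom is_context_box_ctx]
      by (simp add: sigs_agree_def ctx_sigs_Node_ccomp is_context_not_Nil)
  qed
  ultimately show ?thesis
    by (simp add: sigs_agree_def)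
qed

theorem lemma4p5:
  fixes \<delta> :: "('q::finite) trans set" and Init :: "('a::finite) \<Rightarrow> 'q set"
    and hF :: "'a forest \<Rightarrow> ('q \<times> 'q) set"
    and hC :: "'a forest \<Rightarrow> (('q \<times> 'q) \<times> ('q \<times> 'q)) set"
  assumes "is_hom hF hC"
    and "\<forall>a. hC (box_ctx a) = ctx_sigs \<delta> Init (box_ctx a)"
  shows "(\<forall>F. is_forest F \<and> F \<noteq> [] \<longrightarrow> hF F = forest_sigs \<delta> Init F)
       \<and> (\<forall>C. is_context C \<longrightarrow> hC C = ctx_sigs \<delta> Init C)"
proof -
  have tree: "sigs_agree hF hC \<delta> Init [t]" for t
  proof (induction t)
    case (Node a ts)
    then have "sigs_agree hF hC \<delta> Init ts"
      using sigs_agree_if_trees[OF assms(1)] by blast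
    then show ?case
      using sigs_agree_Node[OF assms(1)] assms(2) by blast
  qed (rule sigs_agree_Hole[OF assms(1)])
  have "sigs_agree hF hC \<delta> Init F" for F
    using sigs_agree_if_trees[OF assms(1) tree] .
  then show ?thesis
    by (simp add: sigs_agree_def fsigs_def)
qed

end
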